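(* Let $\mathcal{P}$ be a profile of unrooted phylogenetic trees whose display graph $G(\mathcal{P})$ is connected. Let $F$ be any minimal separator of $\mathrm{LG}(\mathcal{P})$ and let $u$ be any vertex of any input tree. Then $\mathrm{Inc}(u)\not\subseteq F$.
   Context: A phylogenetic tree is an unrooted tree whose leaves are bijectively labeled (leaves identified with labels; internal vertices have degree at least three). A profile $\mathcal{P}=\{T_1,\dots,T_k\}$ is a finite collection of phylogenetic trees (the input trees); internal vertices of distinct trees are disjoint, while leaves with the same label are the same vertex. The display graph $G(\mathcal{P})$ has vertex set $\bigcup_i V(T_i)$ and edge set $\bigcup_i E(T_i)$. $\mathrm{LG}(\mathcal{P})$ is the line graph of $G(\mathcal{P})$ (vertices are edges of $G(\mathcal{P})$, adjacent iff they share an endpoint). For a vertex $u$ of an input tree, $\mathrm{Inc}(u)$ is the set of edges of $G(\mathcal{P})$ incident with $u$, i.e., the set of vertices $e$ of $\mathrm{LG}(\mathcal{P})$ with $u\in e$. In a graph $G$, for nonadjacent vertices $a,b$, an $a$-$b$ separator is $U\subset V(G)$ with $a,b$ in different components of $G-U$; it is minimal if no proper subset is an $a$-$b$ separator; a minimal separator is a minimal $a$-$b$ separator for some nonadjacent $a,b$. *)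

theory Defs
  imports Main
begin

definition simple_graph :: "'a set \<Rightarrow> 'a set set \<Rightarrow> bool" where
  "simple_graph V E \<longleftrightarrow> E \<subseteq> {{x, y} | x y. x \<in> V \<and> y \<in> V \<and> x \<noteq> y}"

definition reach :: "'a set \<Rightarrow> 'a set set \<Rightarrow> 'a \<Rightarrow> 'a \<Rightarrow> bool" where
  "reach V E = (\<lambda>x y. x \<in> V \<and> y \<in> V \<and> {x, y} \<in> E)\<^sup>*\<^sup>*"

definition connected_graph :: "'a set \<Rightarrow> 'a set set \<Rightarrow> bool" where
  "connected_graph V E \<longleftrightarrow> (\<forall>x\<in>V. \<forall>y\<in>V. reach V E x y)"

definition deg :: "'a set set \<Rightarrow> 'a \<Rightarrow> nat" where
  "deg E v = card {e \<in> E. v \<in> e}"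

text \<open>A (finite) tree: nonempty, connected, and minimally connected
  (removing any edge disconnects its endpoints, i.e. acyclic).\<close>
definition is_tree :: "'a set \<Rightarrow> 'a set set \<Rightarrow> bool" where
  "is_tree V E \<longleftrightarrow> finite V \<and> V \<noteq> {} \<and> simple_graph V E \<and> connected_graph V E \<and>
     (\<forall>x y. {x, y} \<in> E \<longrightarrow> \<not> reach V (E - {{x, y}}) x y)"

definition leaves :: "'a set \<Rightarrow> 'a set set \<Rightarrow> 'a set" where
  "leaves V E = {v \<in> V. deg E v \<le> 1}"

text \<open>Phylogenetic tree: leaves are identified with their labels;
  internal vertices have degree at least three.\<close>
definition phylo_tree :: "'a set \<Rightarrow> 'a set set \<Rightarrow> bool" where
  "phylo_tree V E \<longleftrightarrow> is_tree V E \<and> (\<forall>v \<in> V - leaves V E. 3 \<le> deg E v)"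

definition profile :: "('a set \<times> 'a set set) set \<Rightarrow> bool" where
  "profile P \<longleftrightarrow> finite P \<and> (\<forall>(V, E) \<in> P. phylo_tree V E) \<and>
     (\<forall>T1 \<in> P. \<forall>T2 \<in> P. T1 \<noteq> T2 \<longrightarrow>
        fst T1 \<inter> fst T2 \<subseteq> leaves (fst T1) (snd T1) \<inter> leaves (fst T2) (snd T2))"

definition display_V :: "('a set \<times> 'a set set) set \<Rightarrow> 'a set" where
  "display_V P = \<Union> (fst ` P)"

definition display_E :: "('a set \<times> 'a set set) set \<Rightarrow> 'a set set" where
  "display_E P = \<Union> (snd ` P)"

definition line_edges :: "'a set set \<Rightarrow> 'a set set set" where
  "line_edges E = {{e, f} | e f. e \<in> E \<and> f \<in> E \<and> e \<noteq> f \<and> e \<inter> f \<noteq> {}}"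

definition Inc :: "('a set \<times> 'a set set) set \<Rightarrow> 'a \<Rightarrow> 'a set set" where
  "Inc P u = {e \<in> display_E P. u \<in> e}"

definition separator :: "'a set \<Rightarrow> 'a set set \<Rightarrow> 'a \<Rightarrow> 'a \<Rightarrow> 'a set \<Rightarrow> bool" where
  "separator V E a b U \<longleftrightarrow> U \<subseteq> V \<and> a \<in> V - U \<and> b \<in> V - U \<and> \<not> reach (V - U) E a b"

definition minimal_ab_separator :: "'a set \<Rightarrow> 'a set set \<Rightarrow> 'a \<Rightarrow> 'a \<Rightarrow> 'a set \<Rightarrow> bool" where
  "minimal_ab_separator V E a b U \<longleftrightarrow> separator V E a b U \<and> (\<forall>U'. U' \<subset> U \<longrightarrow> \<not> separator V E a b U')"

definition minimal_separator :: "'a set \<Rightarrow> 'a set set \<Rightarrow> 'a set \<Rightarrow> bool" where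
  "minimal_separator V E U \<longleftrightarrow>
     (\<exists>a b. a \<in> V \<and> b \<in> V \<and> a \<noteq> b \<and> {a, b} \<notin> E \<and> minimal_ab_separator V E a b U)"

end

theory Submission
  imports Defs
begin

text \<open>Suppose \<open>Inc(u) \<subseteq> F\<close> for a minimal \<open>a\<close>-\<open>b\<close> separator \<open>F\<close> of the line graph, and pick an
  edge \<open>f = {u, w}\<close> of the display graph (one exists since the display graph is connected and
  has edges). By minimality, \<open>f\<close> has a line-graph neighbour \<open>g\<close> in the component of \<open>a\<close> and a
  neighbour \<open>h\<close> in the component of \<open>b\<close>. Neither contains \<open>u\<close>, as they lie outside
  \<open>F \<supseteq> Inc(u)\<close>, so both contain \<open>w\<close>; hence \<open>g = h\<close> or \<open>g\<close> and \<open>h\<close> are adjacent, joining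
  \<open>a\<close> to \<open>b\<close> outside \<open>F\<close>.\<close>

lemma reach_sym: "reach V E x y \<Longrightarrow> reach V E y x"
  unfolding reach_def
proof (induction rule: rtranclp_induct)
  case base
  then show ?case by simp
next
  case (step y z)
  then have "(\<lambda>x y. x \<in> V \<and> y \<in> V \<and> {x, y} \<in> E) z y"
    by (simp add: insert_commute)
  then show ?case using step.IH by (rule converse_rtranclp_into_rtranclp)
qed

lemma reach_trans: "reach V E x y \<Longrightarrow> reach V E y z \<Longrightarrow> reach V E x z"
  unfolding reach_def by (rule rtranclp_trans)

lemma reach_mem: "reach V E x y \<Longrightarrow> x \<in> V \<Longrightarrow> y \<in> V"
  unfolding reach_def by (induction rule: rtranclp_induct) auto

lemma reach_snoc: "reach V E x y \<Longrightarrow> y \<in> V \<Longrightarrow> z \<in> V \<Longrightarrow> {y, z} \<in> E \<Longrightarrow> reach V E x z"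
  unfolding reach_def by (simp add: rtranclp.rtrancl_into_rtrancl)

lemma reach_insert_cases:
  assumes "reach (insert f W) E x y" "x \<in> W"
  shows "reach W E x y \<or> (\<exists>g\<in>W. reach W E x g \<and> {g, f} \<in> E)"
  using assms(1) unfolding reach_def[of "insert f W"]
proof (induction rule: rtranclp_induct)
  case base
  then show ?case by (simp add: reach_def)
next
  case (step y z)
  then have yz: "z \<in> insert f W" "{y, z} \<in> E" by simp_all
  show ?case
  proof (cases "reach W E x y")
    case True
    then have "y \<in> W" using reach_mem assms(2) by metis
    show ?thesis
    proof (cases "z = f")
      case True
      then show ?thesis using \<open>y \<in> W\<close> \<open>reach W E x y\<close> yz(2) by blast
    next
      case False
      then show ?thesis using \<open>y \<in> W\<close> yz reach_snoc[OF \<open>reach W E x y\<close>] by blast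
    qed
  next
    case False
    then show ?thesis using step.IH by blast
  qed
qed

lemma separator_sym: "separator V E a b U \<Longrightarrow> separator V E b a U"
  unfolding separator_def by (blast dest: reach_sym)

lemma minimal_ab_separator_sym:
  "minimal_ab_separator V E a b U \<Longrightarrow> minimal_ab_separator V E b a U"
  unfolding minimal_ab_separator_def by (blast dest: separator_sym)

lemma minimal_ab_separator_neighbour:
  assumes min: "minimal_ab_separator V E a b F" and "f \<in> F"
  obtains g where "g \<in> V - F" "reach (V - F) E a g" "{g, f} \<in> E"
proof -
  have sep: "separator V E a b F" using min unfolding minimal_ab_separator_def by blast
  have "\<not> separator V E a b (F - {f})"
    using min \<open>f \<in> F\<close> unfolding minimal_ab_separator_def by blast
  then have "reach (V - (F - {f})) E a b"
    using sep unfolding separator_def by blast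
  moreover have "V - (F - {f}) = insert f (V - F)"
    using sep \<open>f \<in> F\<close> unfolding separator_def by blast
  ultimately have "reach (insert f (V - F)) E a b" by simp
  moreover have "a \<in> V - F" "\<not> reach (V - F) E a b"
    using sep unfolding separator_def by auto
  ultimately show thesis using reach_insert_cases[of f "V - F" E a b] that by blast
qed

lemma line_edges_inter: "{e, f} \<in> line_edges X \<Longrightarrow> e \<inter> f \<noteq> {}"
  unfolding line_edges_def by (auto simp: doubleton_eq_iff)

lemma line_edgesI:
  "e \<in> X \<Longrightarrow> f \<in> X \<Longrightarrow> e \<noteq> f \<Longrightarrow> w \<in> e \<Longrightarrow> w \<in> f \<Longrightarrow> {e, f} \<in> line_edges X"
  unfolding line_edges_def by blast

lemma profile_display_edge:
  assumes "profile P" "e \<in> display_E P"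
  obtains x y where "e = {x, y}" "x \<noteq> y" "x \<in> display_V P" "y \<in> display_V P"
proof -
  obtain V E where T: "(V, E) \<in> P" "e \<in> E"
    using assms(2) unfolding display_E_def by force
  then have "simple_graph V E"
    using assms(1) unfolding profile_def phylo_tree_def is_tree_def by blast
  moreover have "V \<subseteq> display_V P" using T(1) unfolding display_V_def by force
  ultimately show thesis using T(2) that unfolding simple_graph_def by blast
qed

lemma Inc_nonempty:
  assumes "profile P" "connected_graph (display_V P) (display_E P)"
    and "display_E P \<noteq> {}" "u \<in> display_V P"
  shows "Inc P u \<noteq> {}"
proof -
  obtain e where "e \<in> display_E P" using assms(3) by blast
  then obtain x y where xy: "e = {x, y}" "x \<in> display_V P"
    using profile_display_edge[OF assms(1)] by metis
  show ?thesis
  proof (cases "u = x")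
    case True
    then show ?thesis using \<open>e \<in> display_E P\<close> xy unfolding Inc_def by blast
  next
    case False
    have "reach (display_V P) (display_E P) u x"
      using assms(2,4) xy(2) unfolding connected_graph_def by blast
    then obtain z where "{u, z} \<in> display_E P"
      using False unfolding reach_def by (cases rule: converse_rtranclpE) auto
    then show ?thesis unfolding Inc_def by blast
  qed
qed

theorem lemma3:
  fixes P :: "('a set \<times> 'a set set) set"
  assumes "profile P"
    and "connected_graph (display_V P) (display_E P)"
    and "minimal_separator (display_E P) (line_edges (display_E P)) F"
    and "T \<in> P" and "u \<in> fst T"
  shows "\<not> Inc P u \<subseteq> F"
proof
  assume sub: "Inc P u \<subseteq> F"
  let ?V = "display_E P" and ?E = "line_edges (display_E P)"
  obtain a b where a: "a \<in> ?V" and min: "minimal_ab_separator ?V ?E a b F"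
    using assms(3) unfolding minimal_separator_def by blast
  have "u \<in> display_V P" using assms(4,5) unfolding display_V_def by blast
  then obtain f where f: "f \<in> Inc P u"
    using Inc_nonempty[OF assms(1,2)] a by blast
  then have "f \<in> ?V" "u \<in> f" unfolding Inc_def by auto
  then obtain w where fw: "f = {u, w}"
    using profile_display_edge[OF assms(1)] by (metis insert_commute insertE singletonD)
  have "w \<in> e" if "e \<in> ?V - F" "{e, f} \<in> ?E" for e
  proof -
    have "u \<notin> e" using that(1) sub unfolding Inc_def by blast
    then show ?thesis using line_edges_inter[OF that(2)] fw by blast
  qed
  moreover obtain g where g: "g \<in> ?V - F" "reach (?V - F) ?E a g" "{g, f} \<in> ?E"
    using minimal_ab_separator_neighbour[OF min] f sub by blast
  moreover obtain h where h: "h \<in> ?V - F" "reach (?V - F) ?E b h" "{h, f} \<in> ?E"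
    using minimal_ab_separator_neighbour[OF minimal_ab_separator_sym[OF min]] f sub by blast
  ultimately have "g = h \<or> {g, h} \<in> ?E"
    using line_edgesI[of g ?V h w] by (metis Diff_iff)
  then have "reach (?V - F) ?E a h"
    using g(1,2) h(1) reach_snoc[OF g(2) g(1) h(1)] by blast
  then have "reach (?V - F) ?E a b"
    using reach_trans[OF _ reach_sym[OF h(2)]] by blast
  then show False using min unfolding minimal_ab_separator_def separator_def by blast
qed

end
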